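(* Fix an integer $q\ge 2$ and let $a_1/b_1<a_2/b_2<\dots<a_m/b_m=1$ be the elements (in lowest terms, with positive integers $a_k,b_k$) of the set of reduced fractions $a/b\le 1$ with $2\le a+b\le q$. Let $n=4\sum_{k=1}^m b_k$ and define binary sequences of length $n$ $$S=0^{b_1+a_1}1^{b_1-a_1}0^{b_2+a_2}1^{b_2-a_2}\cdots 0^{b_m+a_m}1^{b_m-a_m}\;0^{b_m-a_m}1^{b_m+a_m}\cdots 0^{b_1-a_1}1^{b_1+a_1},\qquad T=1^{n/2}0^{n/2}.$$ For $1\le r\le m$ let $j(r)=\sum_{k=r}^m 2b_k$ and $j(m+1)=0$. For $1\le r\le m+1$ let $\Gamma_r$ be the alignment of $S$ and $T$ in which the first $j(r)$ occurrences of $0$ in $S$ are aligned with spaces, the remaining $n-j(r)$ characters of $S$ are aligned in order, without spaces, with the first $n-j(r)$ characters of $T$, and the last $j(r)$ characters of $T$ are aligned with spaces (so $\Gamma_{m+1}$ is the alignment with no spaces). Then for every alignment $\Gamma$ of $S$ and $T$ and every $\beta\ge 0$, there is some $r\in\{1,\dots,m+1\}$ such that $\mathrm{score}_{(0,\beta)}(\Gamma_r)\ge \mathrm{score}_{(0,\beta)}(\Gamma)$.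
   Context: An alignment of sequences $S,T$ is a pair $(S',T')$ of equal-length strings obtained by inserting space symbols "$-$" into $S$ and $T$, with no position having spaces in both. Its summary is $(w,x,y)$, with $w$ the number of positions with equal characters (matches), $x$ the number of positions with different characters (mismatches), and $y$ the number of positions with a space. For parameters $(\alpha,\beta)$, $\mathrm{score}_{(\alpha,\beta)}(\Gamma)=w-\alpha x-\beta y$; in particular $\mathrm{score}_{(0,\beta)}(\Gamma)=w-\beta y$. *)

theory Defs
  imports Complex_Main
begin

text \<open>Characters are natural numbers (0 and 1 are used); a space is None.
  An alignment is a list of columns (top character, bottom character).\<close>

type_synonym column = "nat option \<times> nat option"

definition is_alignment :: "nat list \<Rightarrow> nat list \<Rightarrow> column list \<Rightarrow> bool" where
  "is_alignment S T G \<longleftrightarrow>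
     List.map_filter fst G = S \<and> List.map_filter snd G = T \<and>
     (\<forall>c\<in>set G. fst c \<noteq> None \<or> snd c \<noteq> None)"

definition matches :: "column list \<Rightarrow> nat" where
  "matches G = length (filter (\<lambda>(x, y). x \<noteq> None \<and> y \<noteq> None \<and> x = y) G)"

definition mismatches :: "column list \<Rightarrow> nat" where
  "mismatches G = length (filter (\<lambda>(x, y). x \<noteq> None \<and> y \<noteq> None \<and> x \<noteq> y) G)"

definition spaces :: "column list \<Rightarrow> nat" where
  "spaces G = length (filter (\<lambda>(x, y). x = None \<or> y = None) G)"

definition score :: "real \<Rightarrow> real \<Rightarrow> column list \<Rightarrow> real" where
  "score \<alpha> \<beta> G = real (matches G) - \<alpha> * real (mismatches G) - \<beta> * real (spaces G)"

definition farey_set :: "nat \<Rightarrow> (nat \<times> nat) set" where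
  "farey_set q = {(a, b). 0 < a \<and> 0 < b \<and> coprime a b \<and> a \<le> b \<and> 2 \<le> a + b \<and> a + b \<le> q}"

definition fracval :: "nat \<times> nat \<Rightarrow> real" where
  "fracval p = real (fst p) / real (snd p)"

definition seqS :: "(nat \<times> nat) list \<Rightarrow> nat list" where
  "seqS fs = concat (map (\<lambda>(a, b). replicate (b + a) 0 @ replicate (b - a) 1) fs)
           @ concat (map (\<lambda>(a, b). replicate (b - a) 0 @ replicate (b + a) 1) (rev fs))"

definition nlen :: "(nat \<times> nat) list \<Rightarrow> nat" where
  "nlen fs = 4 * sum_list (map snd fs)"

definition seqT :: "(nat \<times> nat) list \<Rightarrow> nat list" where
  "seqT fs = replicate (nlen fs div 2) 1 @ replicate (nlen fs div 2) 0"

text \<open>0-based: jval fs r = sum over k = r..m-1 of 2 b_k (paper's j(r+1)); jval fs m = 0.\<close>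
definition jval :: "(nat \<times> nat) list \<Rightarrow> nat \<Rightarrow> nat" where
  "jval fs r = (\<Sum>k\<in>{r..<length fs}. 2 * snd (fs ! k))"

fun gam_aux :: "nat \<Rightarrow> nat list \<Rightarrow> nat list \<Rightarrow> column list" where
  "gam_aux k [] ts = map (\<lambda>t. (None, Some t)) ts"
| "gam_aux k (s # ss) ts =
     (if s = 0 \<and> 0 < k then (Some s, None) # gam_aux (k - 1) ss ts
      else (case ts of [] \<Rightarrow> (Some s, None) # gam_aux k ss []
                     | t # ts' \<Rightarrow> (Some s, Some t) # gam_aux k ss ts'))"

definition gamma :: "(nat \<times> nat) list \<Rightarrow> nat \<Rightarrow> column list" where
  "gamma fs r = gam_aux (jval fs r) (seqS fs) (seqT fs)"

end

theory Submission
  imports Defs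
begin

text \<open>Cut an alignment of \<open>S\<close> with \<open>T = 1\<^sup>N 0\<^sup>N\<close> where the ones of \<open>T\<close> end, and let \<open>p\<close>
  be the number of characters of \<open>S\<close> before the cut. Then the alignment has at most
  \<open>cut_count S p\<close> matches (ones of \<open>S\<close> before the cut, zeros after it) and at least
  \<open>2 |N - p|\<close> spaces, while \<open>\<Gamma>\<^sub>r\<close> attains \<open>cut_count S (N + j) - 2\<beta> j\<close> with \<open>j = j(r)\<close>.
  On each run \<open>0\<^sup>x 1\<^sup>y\<close> of \<open>S\<close> the function \<open>p \<mapsto> cut_count S p\<close> is \<open>|x - p|\<close> up to a
  shift, so \<open>cut_count S p - 2\<beta> |N - p|\<close> is convex there and is maximal at a run
  boundary. The second half of \<open>S\<close> is the reversed complement of the first half, which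
  makes \<open>cut_count S\<close> symmetric about \<open>N\<close>; the run boundaries in the second half are
  exactly the cuts \<open>N + j(r)\<close>.\<close>

lemma map_filter_append [simp]:
  "List.map_filter f (xs @ ys) = List.map_filter f xs @ List.map_filter f ys"
  by (simp add: List.map_filter_def)

lemma matches_append [simp]: "matches (G @ G') = matches G + matches G'"
  by (simp add: matches_def)

lemma spaces_append [simp]: "spaces (G @ G') = spaces G + spaces G'"
  by (simp add: spaces_def)

lemma matches_Cons:
  "matches (g # G) = (if fst g \<noteq> None \<and> snd g \<noteq> None \<and> fst g = snd g then 1 else 0) + matches G"
  by (cases g) (simp add: matches_def)

lemma spaces_Cons: "spaces (g # G) = (if fst g = None \<or> snd g = None then 1 else 0) + spaces G"
  by (cases g) (simp add: spaces_def)

lemma map_filter_snd_split: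
  assumes "List.map_filter snd G = ys @ zs"
  obtains G1 G2 where "G = G1 @ G2" "List.map_filter snd G1 = ys" "List.map_filter snd G2 = zs"
  using assms
proof (induction G arbitrary: ys thesis)
  case Nil
  then show ?case by simp
next
  case (Cons g G)
  show ?case
  proof (cases "snd g = None \<or> ys = []")
    case True
    then show ?thesis
    proof
      assume "snd g = None"
      with Cons.prems(2) obtain G1 G2 where
        "G = G1 @ G2" "List.map_filter snd G1 = ys" "List.map_filter snd G2 = zs"
        using Cons.IH by auto
      with \<open>snd g = None\<close> show ?thesis by (intro Cons.prems(1)[of "g # G1" G2]) auto
    next
      assume "ys = []"
      with Cons.prems show ?thesis by (intro Cons.prems(1)[of "[]" "g # G"]) auto
    qed
  next
    case False
    then obtain y ys' where ys: "ys = y # ys'" and g: "snd g = Some y"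
      using Cons.prems(2) by (cases ys) (auto split: option.splits)
    with Cons.prems(2) obtain G1 G2 where
      "G = G1 @ G2" "List.map_filter snd G1 = ys'" "List.map_filter snd G2 = zs"
      using Cons.IH by auto
    with ys g show ?thesis by (intro Cons.prems(1)[of "g # G1" G2]) auto
  qed
qed

lemma matches_le_count_list:
  "set (List.map_filter snd G) \<subseteq> {c} \<Longrightarrow> matches G \<le> count_list (List.map_filter fst G) c"
proof (induction G)
  case Nil
  then show ?case by (simp add: matches_def)
next
  case (Cons g G)
  then show ?case by (cases g; cases "fst g"; cases "snd g") (auto simp: matches_Cons)
qed

lemma length_diff_le_spaces:
  "\<bar>int (length (List.map_filter fst G)) - int (length (List.map_filter snd G))\<bar> \<le> int (spaces G)"
proof (induction G)
  case Nil
  then show ?case by (simp add: spaces_def)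
next
  case (Cons g G)
  then show ?case by (cases g; cases "fst g"; cases "snd g") (auto simp: spaces_Cons)
qed

text \<open>The number of matches when the first \<open>p\<close> characters of \<open>S\<close> are aligned with ones
  and the rest with zeros.\<close>
definition cut_count :: "nat list \<Rightarrow> nat \<Rightarrow> nat" where
  "cut_count S p = count_list (take p S) 1 + count_list (drop p S) 0"

lemma cut_count_append_left:
  "p \<le> length B \<Longrightarrow> cut_count (B @ W) p = cut_count B p + count_list W 0"
  by (simp add: cut_count_def)

lemma cut_count_append_right:
  "cut_count (B @ W) (length B + p) = count_list B 1 + cut_count W p"
  by (simp add: cut_count_def)

lemma score_le_cut_count:
  fixes \<beta> :: real
  assumes "is_alignment S (replicate N 1 @ replicate N 0) G" "length S = 2 * N" "0 \<le> \<beta>"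
  obtains p where "p \<le> 2 * N" "score 0 \<beta> G \<le> real (cut_count S p) - 2 * \<beta> * \<bar>real N - real p\<bar>"
proof -
  from assms(1) have top: "List.map_filter fst G = S"
    and bottom: "List.map_filter snd G = replicate N 1 @ replicate N 0"
    by (auto simp: is_alignment_def)
  obtain G1 G2 where G: "G = G1 @ G2" and ones: "List.map_filter snd G1 = replicate N 1"
    and zeros: "List.map_filter snd G2 = replicate N 0"
    using map_filter_snd_split[OF bottom] .
  define p where "p = length (List.map_filter fst G1)"
  have S: "S = List.map_filter fst G1 @ List.map_filter fst G2"
    using top G by simp
  have p: "p \<le> 2 * N" and p2: "length (List.map_filter fst G2) = 2 * N - p"
    using S assms(2) by (auto simp: p_def)
  have "set (List.map_filter snd G1) \<subseteq> {1}" "set (List.map_filter snd G2) \<subseteq> {0}"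
    using ones zeros by auto
  then have "matches G \<le> count_list (List.map_filter fst G1) 1 + count_list (List.map_filter fst G2) 0"
    using matches_le_count_list[of G1 1] matches_le_count_list[of G2 0] G by simp
  also have "\<dots> = cut_count S p"
    by (simp add: S p_def cut_count_def)
  finally have "real (matches G) \<le> real (cut_count S p)"
    by simp
  moreover have spaces: "2 * \<bar>int N - int p\<bar> \<le> int (spaces G)"
    using length_diff_le_spaces[of G1] length_diff_le_spaces[of G2] ones zeros p p2 G
    by (simp add: p_def abs_minus_commute)
  then have "2 * \<bar>real N - real p\<bar> \<le> real (spaces G)"
    using of_int_le_iff[where 'a = real, THEN iffD2, OF spaces] by simp
  ultimately have "score 0 \<beta> G \<le> real (cut_count S p) - 2 * \<beta> * \<bar>real N - real p\<bar>"
    using mult_left_mono[OF _ assms(3)] by (fastforce simp: score_def)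
  with p that show ?thesis by blast
qed

lemma count_list_replicate [simp]: "count_list (replicate n a) b = (if a = b then n else 0)"
  by (induction n) auto

lemma count_list_01:
  "set xs \<subseteq> {0, 1::nat} \<Longrightarrow> count_list xs 0 + count_list xs 1 = length xs"
  using sum_count_set[of xs "{0, 1}"] by simp

lemma gam_aux_append:
  "k \<le> count_list xs 0 \<Longrightarrow> length xs = k + length us \<Longrightarrow>
   gam_aux k (xs @ ys) (us @ vs) = gam_aux k xs us @ gam_aux 0 ys vs"
proof (induction xs arbitrary: k us)
  case Nil
  then show ?case by simp
next
  case (Cons x xs)
  show ?case
  proof (cases "x = 0 \<and> 0 < k")
    case True
    then show ?thesis using Cons.prems Cons.IH[of "k - 1" us] by auto
  next
    case False
    then obtain u us' where "us = u # us'"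
      using Cons.prems count_le_length[of xs 0] by (cases us) (auto split: if_splits)
    with False Cons.prems Cons.IH[of k us'] show ?thesis by (auto split: if_splits)
  qed
qed

lemma gam_aux_ones:
  "k \<le> count_list xs 0 \<Longrightarrow> length xs = N + k \<Longrightarrow>
   matches (gam_aux k xs (replicate N 1)) = count_list xs 1 \<and> spaces (gam_aux k xs (replicate N 1)) = k"
proof (induction xs arbitrary: k N)
  case Nil
  then show ?case by (simp add: matches_def spaces_def)
next
  case (Cons x xs)
  show ?case
  proof (cases "x = 0 \<and> 0 < k")
    case True
    then show ?thesis using Cons.prems Cons.IH[of "k - 1" N] by (auto simp: matches_Cons spaces_Cons)
  next
    case False
    then obtain N' where "N = Suc N'"
      using Cons.prems count_le_length[of xs 0] by (cases N) (auto split: if_splits)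
    with False Cons.prems Cons.IH[of k N'] show ?thesis
      by (auto simp: matches_Cons spaces_Cons split: if_splits)
  qed
qed

lemma gam_aux_zeros:
  "length ys \<le> N \<Longrightarrow>
   matches (gam_aux 0 ys (replicate N 0)) = count_list ys 0 \<and> spaces (gam_aux 0 ys (replicate N 0)) = N - length ys"
proof (induction ys arbitrary: N)
  case Nil
  then show ?case by (induction N) (auto simp: matches_def spaces_def)
next
  case (Cons y ys)
  then obtain N' where "N = Suc N'" by (cases N) auto
  with Cons show ?case by (auto simp: matches_Cons spaces_Cons)
qed

lemma score_gam_aux:
  fixes \<beta> :: real
  assumes "set S \<subseteq> {0, 1}" "length S = 2 * N" "count_list S 1 = N" "j \<le> N"
  shows "score 0 \<beta> (gam_aux j S (replicate N 1 @ replicate N 0)) = real (cut_count S (N + j)) - 2 * \<beta> * real j"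
proof -
  define xs where "xs = take (N + j) S"
  define ys where "ys = drop (N + j) S"
  have S: "S = xs @ ys" and xs: "length xs = N + j" and ys: "length ys = N - j"
    using assms by (simp_all add: xs_def ys_def)
  have "count_list xs 1 \<le> N"
    using assms(3) by (simp add: S)
  moreover have "count_list xs 0 + count_list xs 1 = N + j"
    using count_list_01[of xs] assms(1) xs by (simp add: S)
  ultimately have zeros: "j \<le> count_list xs 0"
    by simp
  have "gam_aux j S (replicate N 1 @ replicate N 0) = gam_aux j xs (replicate N 1) @ gam_aux 0 ys (replicate N 0)"
    using gam_aux_append[OF zeros] xs by (simp add: S)
  then show ?thesis
    using gam_aux_ones[OF zeros xs] gam_aux_zeros[of ys N] ys assms(4)
    by (simp add: score_def of_nat_diff cut_count_def xs_def ys_def algebra_simps)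
qed

definition block :: "nat \<times> nat \<Rightarrow> nat list" where
  "block xy = replicate (fst xy) 0 @ replicate (snd xy) 1"

definition blocks :: "(nat \<times> nat) list \<Rightarrow> nat list" where
  "blocks bl = concat (map block bl)"

definition mirror :: "nat list \<Rightarrow> nat list" where
  "mirror xs = rev (map (\<lambda>x. if x = 0 then 1 else 0) xs)"

lemma blocks_simps [simp]:
  "blocks [] = []"
  "blocks (xy # bl) = block xy @ blocks bl"
  "blocks (bl @ bl') = blocks bl @ blocks bl'"
  by (simp_all add: blocks_def)

lemma length_block [simp]: "length (block xy) = fst xy + snd xy"
  by (simp add: block_def)

lemma set_blocks: "set (blocks bl) \<subseteq> {0, 1}"
  by (auto simp: blocks_def block_def)

lemma mirror_blocks: "mirror (blocks bl) = blocks (rev (map prod.swap bl))"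
  by (induction bl) (auto simp: mirror_def block_def)

lemma count_list_mirror_1: "count_list (mirror xs) 1 = count_list xs 0"
  by (induction xs) (auto simp: mirror_def)

lemma count_list_mirror_0: "set xs \<subseteq> {0, 1} \<Longrightarrow> count_list (mirror xs) 0 = count_list xs 1"
  by (induction xs) (auto simp: mirror_def)

lemma mirror_append [simp]: "mirror (xs @ ys) = mirror ys @ mirror xs"
  by (simp add: mirror_def)

lemma length_mirror [simp]: "length (mirror xs) = length xs"
  by (simp add: mirror_def)

lemma count_list_append_mirror_1:
  "set H \<subseteq> {0, 1} \<Longrightarrow> count_list (H @ mirror H) 1 = length H"
  using count_list_01[of H] by (simp add: count_list_mirror_1 del: One_nat_def)

lemma cut_count_mirror_symmetric:
  assumes "set H \<subseteq> {0, 1}" "t \<le> length H"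
  shows "cut_count (H @ mirror H) (length H - t) = cut_count (H @ mirror H) (length H + t)"
proof -
  define A where "A = take (length H - t) H"
  define B where "B = drop (length H - t) H"
  have H: "H = A @ B" and B: "length B = t"
    using assms(2) by (simp_all add: A_def B_def)
  have "set A \<subseteq> {0, 1}" "set B \<subseteq> {0, 1}"
    using assms(1) by (auto simp: H)
  then have "cut_count (H @ mirror H) (length A) = cut_count (H @ mirror H) (length A + 2 * length B)"
    by (simp add: H cut_count_def count_list_mirror_0 count_list_mirror_1 del: One_nat_def)
  then show ?thesis
    by (simp add: H B mult_2 add.assoc)
qed

lemma cut_count_block:
  "p \<le> x + y \<Longrightarrow> real (cut_count (block (x, y)) p) = \<bar>real x - real p\<bar>"
  by (cases "p \<le> x") (auto simp: cut_count_def block_def of_nat_diff)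

text \<open>Convexity of \<open>p \<mapsto> |x - p| - c p\<close> on \<open>[0, x + y]\<close>.\<close>
lemma abs_diff_minus_linear_le_ends:
  fixes c :: real and p x y :: nat
  assumes "p \<le> x + y"
  shows "\<bar>real x - real p\<bar> - c * real p \<le> max (real x) (real y - c * (real x + real y))"
proof (cases "x + y = 0")
  case True
  with assms have "p = 0" by simp
  then show ?thesis by simp
next
  case False
  then have "0 < real x + real y"
    by (auto simp: add_pos_nonneg add_nonneg_pos)
  define t where "t = real p / (real x + real y)"
  have t: "0 \<le> t" "t \<le> 1"
    using assms \<open>0 < real x + real y\<close> by (auto simp: t_def)
  have p: "real p = t * (real x + real y)"
    using \<open>0 < real x + real y\<close> by (simp add: t_def)
  have "\<bar>real x - real p\<bar> = \<bar>(1 - t) * real x - t * real y\<bar>"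
    by (simp add: p algebra_simps)
  also have "\<dots> \<le> (1 - t) * real x + t * real y"
    using t by (intro abs_leI) (simp_all add: mult_nonneg_nonneg)
  finally have "\<bar>real x - real p\<bar> - c * real p \<le> (1 - t) * real x + t * (real y - c * (real x + real y))"
    by (simp add: p algebra_simps)
  also have "\<dots> \<le> max (real x) (real y - c * (real x + real y))"
    using t by (intro convex_bound_le) auto
  finally show ?thesis .
qed

lemma cut_count_blocks_linear_max:
  fixes c :: real
  assumes "p \<le> length (blocks bl)"
  shows "\<exists>i\<le>length bl. real (cut_count (blocks bl) p) - c * p
           \<le> real (cut_count (blocks bl) (length (blocks (take i bl))))
              - c * length (blocks (take i bl))"
  using assms
proof (induction bl arbitrary: p)
  case Nil
  then show ?case by simp
next
  case (Cons xy bl)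
  obtain x y where xy: "xy = (x, y)" by force
  let ?W = "blocks bl"
  show ?case
  proof (cases "x + y \<le> p")
    case True
    define p' where "p' = p - (x + y)"
    have p: "p = length (block xy) + p'"
      using True by (simp add: p'_def xy)
    obtain i where i: "i \<le> length bl"
      "real (cut_count ?W p') - c * p' \<le> real (cut_count ?W (length (blocks (take i bl)))) - c * length (blocks (take i bl))"
      using Cons.IH[of p'] Cons.prems by (auto simp: p)
    have "real (cut_count (blocks (xy # bl)) p) - c * p
        = count_list (block xy) 1 + (real (cut_count ?W p') - c * p') - c * length (block xy)"
      by (simp only: p blocks_simps cut_count_append_right) (simp add: algebra_simps)
    also have "\<dots> \<le> count_list (block xy) 1
        + (real (cut_count ?W (length (blocks (take i bl)))) - c * length (blocks (take i bl)))
        - c * length (block xy)"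
      using i(2) by simp
    also have "\<dots> = real (cut_count (blocks (xy # bl)) (length (blocks (take (Suc i) (xy # bl)))))
        - c * length (blocks (take (Suc i) (xy # bl)))"
      by (simp only: take_Suc_Cons blocks_simps cut_count_append_right length_append)
         (simp add: algebra_simps)
    finally show ?thesis
      using i(1) by (intro exI[of _ "Suc i"]) simp
  next
    case False
    let ?f = "\<lambda>k. real (cut_count (blocks (xy # bl)) k) - c * k"
    have "?f p = \<bar>real x - real p\<bar> - c * p + count_list ?W 0"
      using False cut_count_block[of p x y] by (simp add: xy cut_count_append_left)
    also have "\<dots> \<le> max (real x) (real y - c * (real x + real y)) + count_list ?W 0"
      using abs_diff_minus_linear_le_ends[of p x y c] False by simp
    also have "\<dots> = max (?f 0) (?f (x + y))"
      using cut_count_append_right[of "block xy" ?W 0]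
      by (simp add: xy cut_count_def block_def)
    finally have "?f p \<le> ?f 0 \<or> ?f p \<le> ?f (x + y)"
      by (simp only: le_max_iff_disj)
    then show ?thesis
    proof
      assume "?f p \<le> ?f 0"
      then show ?thesis by (intro exI[of _ 0]) simp
    next
      assume "?f p \<le> ?f (x + y)"
      then show ?thesis by (intro exI[of _ 1]) (simp add: xy)
    qed
  qed
qed

lemma length_blocks: "length (blocks bl) = (\<Sum>xy\<leftarrow>bl. fst xy + snd xy)"
  by (induction bl) auto

lemma length_blocks_take_mirror:
  "i \<le> length bl \<Longrightarrow>
   length (blocks (take i (rev (map prod.swap bl)))) = length (blocks (drop (length bl - i) bl))"
  by (simp add: take_rev length_blocks rev_map[symmetric] drop_map comp_def add.commute)

lemma length_blocks_take_drop:
  "length (blocks (take i bl)) + length (blocks (drop i bl)) = length (blocks bl)"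
  by (metis append_take_drop_id blocks_simps(3) length_append)

lemma penalised_cut_count_max:
  fixes c :: real and bl :: "(nat \<times> nat) list"
  defines "H \<equiv> blocks bl"
  assumes "p \<le> 2 * length H"
  obtains i where "i \<le> length bl"
    "real (cut_count (H @ mirror H) p) - c * \<bar>real (length H) - real p\<bar>
       \<le> real (cut_count (H @ mirror H) (length H + length (blocks (drop i bl))))
          - c * length (blocks (drop i bl))"
proof (cases "length H \<le> p")
  case True
  define t where "t = p - length H"
  have p: "p = length H + t"
    using True by (simp add: t_def)
  have "t \<le> length (blocks (rev (map prod.swap bl)))"
    using assms(2) by (simp add: p H_def length_blocks rev_map[symmetric] comp_def add.commute)
  then obtain i where i: "i \<le> length bl"
    "real (cut_count (mirror H) t) - c * t
       \<le> real (cut_count (mirror H) (length (blocks (drop (length bl - i) bl))))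
          - c * length (blocks (drop (length bl - i) bl))"
    using cut_count_blocks_linear_max[of t "rev (map prod.swap bl)" c]
    by (auto simp: H_def mirror_blocks length_blocks_take_mirror)
  show ?thesis
  proof (rule that[of "length bl - i"])
    show "real (cut_count (H @ mirror H) p) - c * \<bar>real (length H) - real p\<bar>
       \<le> real (cut_count (H @ mirror H) (length H + length (blocks (drop (length bl - i) bl))))
          - c * length (blocks (drop (length bl - i) bl))"
      using i(2) by (simp add: p cut_count_append_right)
  qed simp
next
  case False
  obtain i where i: "i \<le> length bl"
    "real (cut_count H p) + c * p
       \<le> real (cut_count H (length (blocks (take i bl)))) + c * length (blocks (take i bl))"
    using cut_count_blocks_linear_max[of p bl "- c"] False by (auto simp: H_def)
  define j where "j = length (blocks (drop i bl))"
  have k: "length (blocks (take i bl)) = length H - j" and j: "j \<le> length H"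
    using length_blocks_take_drop[of i bl] by (simp_all add: H_def j_def)
  have "real (cut_count (H @ mirror H) p) - c * \<bar>real (length H) - real p\<bar>
      = real (cut_count H p) + c * p + count_list (mirror H) 0 - c * length H"
    using False by (simp add: cut_count_append_left algebra_simps)
  also have "\<dots> \<le> real (cut_count H (length H - j)) + count_list (mirror H) 0 - c * j"
    using i(2) j by (simp add: k of_nat_diff algebra_simps)
  also have "\<dots> = real (cut_count (H @ mirror H) (length H - j)) - c * j"
    using j by (simp add: cut_count_append_left)
  also have "\<dots> = real (cut_count (H @ mirror H) (length H + j)) - c * j"
    using set_blocks[of bl] j unfolding H_def by (simp only: cut_count_mirror_symmetric)
  finally show ?thesis
    using that i(1) by (auto simp: j_def)
qed

definition seqS_blocks :: "(nat \<times> nat) list \<Rightarrow> (nat \<times> nat) list" where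
  "seqS_blocks fs = map (\<lambda>(a, b). (b + a, b - a)) fs"

lemma seqS_eq_blocks_mirror: "seqS fs = blocks (seqS_blocks fs) @ mirror (blocks (seqS_blocks fs))"
  unfolding mirror_blocks
  by (simp add: seqS_def seqS_blocks_def blocks_def block_def rev_map split_def comp_def)

lemma length_seqS_blocks [simp]: "length (seqS_blocks fs) = length fs"
  by (simp add: seqS_blocks_def)

lemma jval_eq_sum_list: "jval fs r = (\<Sum>p\<leftarrow>drop r fs. 2 * snd p)"
  by (cases "r \<le> length fs")
     (simp_all add: jval_def sum_list_sum_nth sum.atLeastLessThan_shift_0[of _ r] add.commute)

lemma length_blocks_seqS_blocks:
  "\<forall>(a, b)\<in>set fs. a \<le> b \<Longrightarrow> length (blocks (seqS_blocks fs)) = (\<Sum>p\<leftarrow>fs. 2 * snd p)"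
  by (induction fs) (auto simp: seqS_blocks_def)

lemma length_blocks_drop_seqS_blocks:
  "\<forall>(a, b)\<in>set fs. a \<le> b \<Longrightarrow> length (blocks (drop r (seqS_blocks fs))) = jval fs r"
  using length_blocks_seqS_blocks[of "drop r fs"]
  by (auto simp: seqS_blocks_def drop_map jval_eq_sum_list dest: in_set_dropD)

lemma seqT_eq_replicate: "seqT fs = replicate (jval fs 0) 1 @ replicate (jval fs 0) 0"
  by (simp add: seqT_def nlen_def jval_eq_sum_list sum_list_const_mult)

lemma score_gamma:
  fixes \<beta> :: real
  assumes "\<forall>(a, b)\<in>set fs. a \<le> b"
  shows "score 0 \<beta> (gamma fs r) = real (cut_count (seqS fs) (jval fs 0 + jval fs r)) - 2 * \<beta> * real (jval fs r)"
proof -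
  define H where "H = blocks (seqS_blocks fs)"
  have S: "seqS fs = H @ mirror H" and N: "length H = jval fs 0"
    using seqS_eq_blocks_mirror length_blocks_drop_seqS_blocks[OF assms, of 0] by (simp_all add: H_def)
  have "set H \<subseteq> {0, 1}"
    unfolding H_def by (rule set_blocks)
  then have "set (seqS fs) \<subseteq> {0, 1}"
    by (auto simp: S mirror_def)
  moreover have "length (seqS fs) = 2 * jval fs 0"
    using N by (simp add: S mirror_def)
  moreover have "count_list (seqS fs) 1 = jval fs 0"
    using count_list_append_mirror_1[of H] \<open>set H \<subseteq> {0, 1}\<close> N by (simp add: S)
  moreover have "jval fs r \<le> jval fs 0"
    using length_blocks_take_drop[of r "seqS_blocks fs"] length_blocks_drop_seqS_blocks[OF assms]
    by (metis drop0 le_add2)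
  ultimately show ?thesis
    unfolding gamma_def seqT_eq_replicate by (rule score_gam_aux)
qed

theorem mainTheorem4:
  fixes q :: nat and fs :: "(nat \<times> nat) list" and G :: "column list" and \<beta> :: real
  assumes "2 \<le> q"
    and "set fs = farey_set q"
    and "sorted_wrt (\<lambda>p p'. fracval p < fracval p') fs"
    and "is_alignment (seqS fs) (seqT fs) G"
    and "0 \<le> \<beta>"
  shows "\<exists>r\<in>{0..length fs}. score 0 \<beta> (gamma fs r) \<ge> score 0 \<beta> G"
proof -
  have proper: "\<forall>(a, b)\<in>set fs. a \<le> b"
    using assms(2) by (auto simp: farey_set_def)
  define H where "H = blocks (seqS_blocks fs)"
  have S: "seqS fs = H @ mirror H" and N: "length H = jval fs 0"
    using seqS_eq_blocks_mirror length_blocks_drop_seqS_blocks[OF proper, of 0] by (simp_all add: H_def)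
  have "length (seqS fs) = 2 * jval fs 0"
    using S N by simp
  then obtain p where p: "p \<le> 2 * jval fs 0"
    "score 0 \<beta> G \<le> real (cut_count (seqS fs) p) - 2 * \<beta> * \<bar>real (jval fs 0) - real p\<bar>"
    using score_le_cut_count assms(4,5) unfolding seqT_eq_replicate by blast
  obtain r where r: "r \<le> length fs"
    "real (cut_count (seqS fs) p) - 2 * \<beta> * \<bar>real (jval fs 0) - real p\<bar>
       \<le> real (cut_count (seqS fs) (jval fs 0 + jval fs r)) - 2 * \<beta> * real (jval fs r)"
    using penalised_cut_count_max[of p "seqS_blocks fs" "2 * \<beta>", folded H_def] p(1)
    unfolding S N[symmetric] by (auto simp: length_blocks_drop_seqS_blocks[OF proper])
  with p(2) show ?thesis
    by (intro bexI[of _ r]) (auto simp: score_gamma[OF proper])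
qed

end
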